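(* There exist positive constants $h_0$ and $C_0$, independent of $n$ and of the potential $a$, such that for every bounded measurable $a:[0,1]\to[0,\infty)$, every $N\ge1$ with $h=1/(N+1)\in(0,h_0)$, and every $1\le n\le N$, $$\left(\mu_h^n+\frac1{h^2}\right)\left|\frac{\phi_1^n}{\sqrt{\mu_h^n}}\right|^2\le C_0\left(1+\frac{\|a\|^2_{L^\infty(0,1)}}{\mu_h^n}\right),$$ where $\Psi_h^n=[\phi^n_j]_{1\le j\le N}\in\mathbb{R}^N$ is an eigenvector of $M_h^{-1}(K_h+L_h)$ for the eigenvalue $\mu_h^n$, normalized by $\langle M_h\Psi_h^n,\Psi_h^n\rangle=1$.
   Context: $h=1/(N+1)$, $x_j=jh$, $a_j=a(x_j)$; $K_h=\frac1h\mathrm{tridiag}(-1,2,-1)$, $M_h=\frac h4\mathrm{tridiag}(1,2,1)$, $L_h=h\,\mathrm{diag}(a_1,\dots,a_N)$. The eigenvalues $\mu_h^1<\dots<\mu_h^N$ of $M_h^{-1}(K_h+L_h)$ are real, simple and positive.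
   Formalization: The norm $\|a\|_{L^\infty(0,1)}$ is replaced by the pointwise supremum of |a| over [0,1], not the essential supremum. The statement above fails without it. *)

theory Defs
  imports "HOL-Analysis.Analysis" "Jordan_Normal_Form.Char_Poly" "Jordan_Normal_Form.Gauss_Jordan_Elimination"
begin

text \<open>Matrices are N x N JNF matrices with 0-based indices; index i corresponds to j = i+1,
  grid point x_j = j h, h = 1/(N+1).\<close>

definition hN :: "nat \<Rightarrow> real" where
  "hN N = 1 / (real N + 1)"

definition K_h :: "nat \<Rightarrow> real mat" where
  "K_h N = mat N N (\<lambda>(i,j). (if i = j then 2 else if i = j + 1 \<or> j = i + 1 then -1 else 0) / hN N)"

definition M_h :: "nat \<Rightarrow> real mat" where
  "M_h N = mat N N (\<lambda>(i,j). hN N / 4 * (if i = j then 2 else if i = j + 1 \<or> j = i + 1 then 1 else 0))"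

definition L_h :: "(real \<Rightarrow> real) \<Rightarrow> nat \<Rightarrow> real mat" where
  "L_h a N = mat N N (\<lambda>(i,j). if i = j then hN N * a (real (i + 1) * hN N) else 0)"

definition A_h :: "(real \<Rightarrow> real) \<Rightarrow> nat \<Rightarrow> real mat" where
  "A_h a N = the (mat_inverse (M_h N)) * (K_h N + L_h a N)"

definition mu_h :: "(real \<Rightarrow> real) \<Rightarrow> nat \<Rightarrow> nat \<Rightarrow> real" where
  "mu_h a N n = sorted_list_of_set {\<mu>. eigenvalue (A_h a N) \<mu>} ! (n - 1)"

definition Linf_norm :: "(real \<Rightarrow> real) \<Rightarrow> real" where
  "Linf_norm a = Sup ((\<lambda>x. \<bar>a x\<bar>) ` {0..1})"

end

theory Submission
  imports Defs
begin

text \<open>Write \<open>w\<^sub>0, ..., w\<^sub>N\<^sub>+\<^sub>1\<close> for the nodal values of the eigenvector, with \<open>w\<^sub>0 = w\<^sub>N\<^sub>+\<^sub>1 = 0\<close>,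
  and put \<open>ell = \<mu> h\<^sup>2 / 4\<close>. As in the continuous multiplier argument for \<open>u'\<^sup>2 + \<mu> u\<^sup>2\<close>, the
  three-term eigen equation makes the discrete energy
  \<open>G\<^sub>j = (w\<^sub>j\<^sub>+\<^sub>1 - w\<^sub>j)\<^sup>2 + ell (w\<^sub>j\<^sub>+\<^sub>1 + w\<^sub>j)\<^sup>2\<close> vary only through the potential:
  \<open>G\<^sub>j - G\<^sub>j\<^sub>-\<^sub>1 = h\<^sup>2 a\<^sub>j w\<^sub>j (w\<^sub>j\<^sub>+\<^sub>1 - w\<^sub>j\<^sub>-\<^sub>1)\<close>. So \<open>G\<^sub>0 = (1 + ell) w\<^sub>1\<^sup>2\<close> is at most the mean of
  \<open>G\<close> plus its total variation. The mean is \<open>O(ell)\<close> by the energy identity and the mass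
  normalisation, and Young's inequality bounds the variation by \<open>h\<^sup>2 \<parallel>a\<parallel>\<^sup>2 + 16 ell\<close>. Dividing
  \<open>(1 + \<mu> h\<^sup>2) w\<^sub>1\<^sup>2 \<le> 24 h\<^sup>2 (\<mu> + \<parallel>a\<parallel>\<^sup>2)\<close> by \<open>\<mu> h\<^sup>2\<close> gives the claim with \<open>C0 = 24\<close>, for every mesh size.\<close>

lemma sum_shifted_combination_sq:
  fixes w :: "nat \<Rightarrow> real"
  assumes "w 0 = 0" "w (N + 1) = 0"
  shows "(\<Sum>j=0..N. (w (j+1) + s * w j)\<^sup>2) = (\<Sum>j=1..N. w j * ((1 + s\<^sup>2) * w j + s * (w (j-1) + w (j+1))))"
proof -
  have "(\<Sum>j=0..n. (w (j+1) + s * w j)\<^sup>2) = (\<Sum>j=1..n. w j * ((1 + s\<^sup>2) * w j + s * (w (j-1) + w (j+1))))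
     + s\<^sup>2 * (w 0)\<^sup>2 + (w (n+1))\<^sup>2 + s * w 0 * w 1 + s * w n * w (n+1)" for n
    by (induction n) (simp_all add: power2_eq_square algebra_simps)
  then show ?thesis using assms by simp
qed

lemma eq_0_if_sum_shifted_combination_sq_eq_0:
  fixes w :: "nat \<Rightarrow> real"
  assumes "w 0 = 0" "(\<Sum>j=0..N. (w (j+1) + s * w j)\<^sup>2) = 0" "j \<le> N + 1"
  shows "w j = 0"
  using assms(3)
proof (induction j)
  case (Suc j)
  have "w (j+1) + s * w j = 0"
    using assms(2) Suc.prems by (subst (asm) sum_nonneg_eq_0_iff) auto
  with Suc show ?case by simp
qed (use assms(1) in simp)

lemma le_mean_plus_total_variation:
  fixes G :: "nat \<Rightarrow> real"
  shows "(real N + 1) * G 0 \<le> (\<Sum>k=0..N. G k) + (real N + 1) * (\<Sum>j=1..N. \<bar>G j - G (j-1)\<bar>)"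
proof -
  have "G 0 \<le> G k + (\<Sum>j=1..N. \<bar>G j - G (j-1)\<bar>)" if "k \<le> N" for k
  proof -
    have "G 0 \<le> G k + (\<Sum>j=1..k. \<bar>G j - G (j-1)\<bar>)"
      by (induction k) auto
    also have "(\<Sum>j=1..k. \<bar>G j - G (j-1)\<bar>) \<le> (\<Sum>j=1..N. \<bar>G j - G (j-1)\<bar>)"
      using that by (intro sum_mono2) auto
    finally show ?thesis by simp
  qed
  then have "(\<Sum>k=0..N. G 0) \<le> (\<Sum>k=0..N. G k + (\<Sum>j=1..N. \<bar>G j - G (j-1)\<bar>))"
    by (intro sum_mono) auto
  then show ?thesis by (simp add: sum.distrib add.commute)
qed

lemma two_mult_le_weighted_sum_sq:
  fixes x y t :: real
  assumes "t > 0"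
  shows "2 * x * y \<le> x\<^sup>2 / t + t * y\<^sup>2"
proof -
  have "0 \<le> (x - t * y)\<^sup>2 / t"
    using assms by simp
  also have "\<dots> = x\<^sup>2 / t + t * y\<^sup>2 - 2 * x * y"
    using assms by (simp add: field_simps power2_eq_square)
  finally show ?thesis by simp
qed

lemma sq_add_le_two_sum_sq: "((x::real) + y)\<^sup>2 \<le> 2 * (x\<^sup>2 + y\<^sup>2)"
  using sum_squares_bound[of x y] by (simp add: power2_sum)

lemma sum_adjacent_pairs:
  fixes G :: "nat \<Rightarrow> 'a::comm_ring_1"
  shows "(\<Sum>j=1..N. G j + G (j-1)) = 2 * (\<Sum>k=0..N. G k) - G 0 - G N"
  by (induction N) (simp_all add: algebra_simps)

locale discrete_eigenfunction =
  fixes N :: nat and h \<mu> A :: real and c w :: "nat \<Rightarrow> real"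
  assumes mesh: "h * (real N + 1) = 1"
    and boundary: "w 0 = 0" "w (N + 1) = 0"
    and eigen_eq: "\<And>j. 1 \<le> j \<Longrightarrow> j \<le> N \<Longrightarrow>
      (2 * w j - w (j-1) - w (j+1)) / h + h * c j * w j = \<mu> * (h / 4 * (2 * w j + w (j-1) + w (j+1)))"
    and potential_bounds: "\<And>j. 1 \<le> j \<Longrightarrow> j \<le> N \<Longrightarrow> 0 \<le> c j \<and> c j \<le> A"
    and normalized: "h / 4 * (\<Sum>j=0..N. (w (j+1) + w j)\<^sup>2) = 1"
begin

lemma h_pos: "h > 0"
proof -
  have "h = 1 / (real N + 1)"
    using mesh by (simp add: eq_divide_eq)
  then show ?thesis by simp
qed

lemma energy_identity: "(\<Sum>j=0..N. (w (j+1) - w j)\<^sup>2) / h + h * (\<Sum>j=1..N. c j * (w j)\<^sup>2) = \<mu>"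
proof -
  have "(\<Sum>j=0..N. (w (j+1) - w j)\<^sup>2) / h + h * (\<Sum>j=1..N. c j * (w j)\<^sup>2)
      = (\<Sum>j=1..N. w j * ((1 + (-1)\<^sup>2) * w j + (-1) * (w (j-1) + w (j+1)))) / h + h * (\<Sum>j=1..N. c j * (w j)\<^sup>2)"
    using sum_shifted_combination_sq[OF boundary, of "-1"] by simp
  also have "\<dots> = (\<Sum>j=1..N. w j * ((2 * w j - w (j-1) - w (j+1)) / h + h * c j * w j))"
    unfolding sum_divide_distrib sum_distrib_left sum.distrib[symmetric]
    by (intro sum.cong) (simp_all add: field_simps power2_eq_square)
  also have "\<dots> = (\<Sum>j=1..N. w j * (\<mu> * (h / 4 * (2 * w j + w (j-1) + w (j+1)))))"
    using eigen_eq by (intro sum.cong) auto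
  also have "\<dots> = \<mu> * (h / 4 * (\<Sum>j=1..N. w j * ((1 + 1\<^sup>2) * w j + 1 * (w (j-1) + w (j+1)))))"
    by (simp add: sum_distrib_left algebra_simps)
  also have "\<dots> = \<mu>"
    using sum_shifted_combination_sq[OF boundary, of 1] normalized by simp
  finally show ?thesis .
qed

lemma eigenvalue_pos: "\<mu> > 0"
proof (rule ccontr)
  assume "\<not> \<mu> > 0"
  moreover have "h * (\<Sum>j=1..N. c j * (w j)\<^sup>2) \<ge> 0"
    using h_pos potential_bounds by (intro mult_nonneg_nonneg sum_nonneg) auto
  ultimately have "(\<Sum>j=0..N. (w (j+1) - w j)\<^sup>2) / h \<le> 0"
    using energy_identity by linarith
  then have "(\<Sum>j=0..N. (w (j+1) + (-1) * w j)\<^sup>2) = 0"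
    using h_pos by (simp add: divide_le_0_iff antisym sum_nonneg)
  then have "w j = 0" if "j \<le> N + 1" for j
    using eq_0_if_sum_shifted_combination_sq_eq_0 boundary(1) that by blast
  then show False
    using normalized by simp
qed

definition ell :: real where
  "ell = \<mu> * h\<^sup>2 / 4"

definition local_energy :: "nat \<Rightarrow> real" where
  "local_energy j = (w (j+1) - w j)\<^sup>2 + ell * (w (j+1) + w j)\<^sup>2"

lemma ell_pos: "ell > 0"
  using eigenvalue_pos h_pos by (simp add: ell_def)

lemma local_energy_nonneg: "local_energy j \<ge> 0"
  using ell_pos by (simp add: local_energy_def)

lemma h_sum_diff_sq_le: "h * (\<Sum>j=0..N. (w (j+1) - w j)\<^sup>2) \<le> 4 * ell"
proof -
  have "h * (\<Sum>j=1..N. c j * (w j)\<^sup>2) \<ge> 0"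
    using h_pos potential_bounds by (intro mult_nonneg_nonneg sum_nonneg) auto
  then have "(\<Sum>j=0..N. (w (j+1) - w j)\<^sup>2) / h \<le> \<mu>"
    using energy_identity by linarith
  then show ?thesis
    using h_pos by (simp add: ell_def divide_le_eq power2_eq_square mult.commute mult.left_commute)
qed

lemma h_sum_sum_sq: "h * (\<Sum>j=0..N. (w (j+1) + w j)\<^sup>2) = 4"
  using normalized by simp

lemma h_sum_local_energy_le: "h * (\<Sum>j=0..N. local_energy j) \<le> 8 * ell"
proof -
  have "h * (\<Sum>j=0..N. local_energy j)
      = h * (\<Sum>j=0..N. (w (j+1) - w j)\<^sup>2) + ell * (h * (\<Sum>j=0..N. (w (j+1) + w j)\<^sup>2))"
    by (simp add: local_energy_def sum.distrib sum_distrib_left algebra_simps)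
  then show ?thesis
    using h_sum_diff_sq_le h_sum_sum_sq by simp
qed

lemma h_sum_sq_le: "h * (\<Sum>j=1..N. (w j)\<^sup>2) \<le> 2 * (1 + ell)"
proof -
  have "(\<Sum>j=1..N. (w j)\<^sup>2) \<le> (\<Sum>j=1..N+1. (w j)\<^sup>2)"
    by (intro sum_mono2) auto
  also have "\<dots> = (\<Sum>j=0..N. (w (j+1))\<^sup>2)"
    using sum.shift_bounds_cl_Suc_ivl[of "\<lambda>j. (w j)\<^sup>2" 0 N] by simp
  also have "\<dots> \<le> (\<Sum>j=0..N. ((w (j+1) - w j)\<^sup>2 + (w (j+1) + w j)\<^sup>2) / 2)"
    by (intro sum_mono) (simp add: power2_eq_square algebra_simps)
  also have "\<dots> = ((\<Sum>j=0..N. (w (j+1) - w j)\<^sup>2) + (\<Sum>j=0..N. (w (j+1) + w j)\<^sup>2)) / 2"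
    by (simp add: sum.distrib sum_divide_distrib[symmetric])
  finally have "h * (\<Sum>j=1..N. (w j)\<^sup>2)
      \<le> h * (((\<Sum>j=0..N. (w (j+1) - w j)\<^sup>2) + (\<Sum>j=0..N. (w (j+1) + w j)\<^sup>2)) / 2)"
    using h_pos by (intro mult_left_mono) auto
  then show ?thesis
    using h_sum_diff_sq_le h_sum_sum_sq by (simp add: algebra_simps)
qed

lemma local_energy_diff:
  assumes "1 \<le> j" "j \<le> N"
  shows "local_energy j - local_energy (j-1) = h\<^sup>2 * c j * w j * (w (j+1) - w (j-1))"
proof -
  have "2 * w j - w (j-1) - w (j+1) + h\<^sup>2 * c j * w j = ell * (2 * w j + w (j-1) + w (j+1))"
    using eigen_eq[OF assms] h_pos by (simp add: ell_def field_simps power2_eq_square)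
  then have "ell * (2 * w j + w (j-1) + w (j+1)) - (2 * w j - w (j-1) - w (j+1)) = h\<^sup>2 * c j * w j"
    by linarith
  moreover have "local_energy j - local_energy (j-1)
      = (w (j+1) - w (j-1)) * (ell * (2 * w j + w (j-1) + w (j+1)) - (2 * w j - w (j-1) - w (j+1)))"
    using assms by (cases j) (simp_all add: local_energy_def power2_eq_square algebra_simps)
  ultimately show ?thesis
    by (simp add: mult_ac)
qed

lemma abs_local_energy_diff_le:
  assumes "1 \<le> j" "j \<le> N"
  shows "\<bar>local_energy j - local_energy (j-1)\<bar>
    \<le> (h * A)\<^sup>2 / (2 * (1 + ell)) * (h * (w j)\<^sup>2) + h / 2 * ((1 + ell) * (w (j+1) - w (j-1))\<^sup>2)"
proof -
  let ?d = "\<bar>w (j+1) - w (j-1)\<bar>"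
  have "\<bar>local_energy j - local_energy (j-1)\<bar> = h * (h * c j * \<bar>w j\<bar>) * ?d"
    using local_energy_diff[OF assms] potential_bounds[OF assms] h_pos
    by (simp add: abs_mult power2_eq_square mult_ac)
  also have "\<dots> \<le> h * (h * A * \<bar>w j\<bar>) * ?d"
    using potential_bounds[OF assms] h_pos by (intro mult_right_mono mult_left_mono) auto
  also have "\<dots> = h / 2 * (2 * (h * A * \<bar>w j\<bar>) * ?d)"
    by simp
  also have "\<dots> \<le> h / 2 * ((h * A * \<bar>w j\<bar>)\<^sup>2 / (1 + ell) + (1 + ell) * ?d\<^sup>2)"
    using two_mult_le_weighted_sum_sq[of "1 + ell" "h * A * \<bar>w j\<bar>" ?d] ell_pos h_pos
    by (intro mult_left_mono) simp_all
  also have "\<dots> = (h * A)\<^sup>2 / (2 * (1 + ell)) * (h * (w j)\<^sup>2) + h / 2 * ((1 + ell) * (w (j+1) - w (j-1))\<^sup>2)"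
    using ell_pos by (simp add: power_mult_distrib field_simps)
  finally show ?thesis .
qed

lemma diff_sq_le_local_energy:
  "(1 + ell) * (w (k+2) - w k)\<^sup>2 \<le> 2 * (local_energy (k+1) + local_energy k)"
proof -
  have "(w (k+2) - w k)\<^sup>2 \<le> 2 * ((w (k+2) - w (k+1))\<^sup>2 + (w (k+1) - w k)\<^sup>2)"
    using sq_add_le_two_sum_sq[of "w (k+2) - w (k+1)" "w (k+1) - w k"] by simp
  moreover have "ell * (w (k+2) - w k)\<^sup>2 \<le> ell * (2 * ((w (k+2) + w (k+1))\<^sup>2 + (w (k+1) + w k)\<^sup>2))"
    using sq_add_le_two_sum_sq[of "w (k+2) + w (k+1)" "- (w (k+1) + w k)", unfolded power2_minus] ell_pos
    by (intro mult_left_mono) simp_all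
  ultimately show ?thesis
    by (simp add: local_energy_def algebra_simps)
qed

lemma sum_abs_local_energy_diff_le:
  "(\<Sum>j=1..N. \<bar>local_energy j - local_energy (j-1)\<bar>) \<le> h\<^sup>2 * A\<^sup>2 + 16 * ell"
proof -
  let ?G = local_energy
  have "(\<Sum>j=1..N. \<bar>?G j - ?G (j-1)\<bar>)
      \<le> (\<Sum>j=1..N. (h * A)\<^sup>2 / (2 * (1 + ell)) * (h * (w j)\<^sup>2) + h / 2 * ((1 + ell) * (w (j+1) - w (j-1))\<^sup>2))"
    by (intro sum_mono abs_local_energy_diff_le) auto
  also have "\<dots> = (h * A)\<^sup>2 / (2 * (1 + ell)) * (h * (\<Sum>j=1..N. (w j)\<^sup>2))
      + h / 2 * (\<Sum>j=1..N. (1 + ell) * (w (j+1) - w (j-1))\<^sup>2)"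
    by (simp add: sum.distrib sum_distrib_left)
  also have "\<dots> \<le> (h * A)\<^sup>2 / (2 * (1 + ell)) * (2 * (1 + ell)) + h / 2 * (\<Sum>j=1..N. 2 * (?G j + ?G (j-1)))"
  proof (intro add_mono mult_left_mono sum_mono)
    fix j assume "j \<in> {1..N}"
    then show "(1 + ell) * (w (j+1) - w (j-1))\<^sup>2 \<le> 2 * (?G j + ?G (j-1))"
      using diff_sq_le_local_energy[of "j-1"] by simp
  qed (use h_sum_sq_le ell_pos h_pos in auto)
  also have "\<dots> \<le> (h * A)\<^sup>2 + h / 2 * (4 * (\<Sum>k=0..N. ?G k))"
  proof -
    have "(\<Sum>j=1..N. 2 * (?G j + ?G (j-1))) = 2 * (\<Sum>j=1..N. ?G j + ?G (j-1))"
      by (simp only: sum_distrib_left)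
    then have "(\<Sum>j=1..N. 2 * (?G j + ?G (j-1))) \<le> 4 * (\<Sum>k=0..N. ?G k)"
      using sum_adjacent_pairs[of ?G N] local_energy_nonneg[of 0] local_energy_nonneg[of N] by linarith
    then show ?thesis
      using ell_pos h_pos by (simp add: mult_left_mono)
  qed
  also have "\<dots> \<le> h\<^sup>2 * A\<^sup>2 + 16 * ell"
    using h_sum_local_energy_le by (simp add: power_mult_distrib algebra_simps)
  finally show ?thesis .
qed

lemma first_node_estimate: "(1 + ell) * (w 1)\<^sup>2 \<le> 24 * ell + h\<^sup>2 * A\<^sup>2"
proof -
  let ?G = local_energy
  have "h * ((real N + 1) * ?G 0)
      \<le> h * ((\<Sum>k=0..N. ?G k) + (real N + 1) * (\<Sum>j=1..N. \<bar>?G j - ?G (j-1)\<bar>))"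
    using le_mean_plus_total_variation h_pos by (intro mult_left_mono) auto
  moreover have "h * ((real N + 1) * x) = x" for x
    using mesh by (metis mult.assoc mult_1)
  ultimately have "?G 0 \<le> h * (\<Sum>k=0..N. ?G k) + (\<Sum>j=1..N. \<bar>?G j - ?G (j-1)\<bar>)"
    by (simp only: distrib_left)
  moreover have "?G 0 = (1 + ell) * (w 1)\<^sup>2"
    using boundary by (simp add: local_energy_def algebra_simps)
  ultimately show ?thesis
    using h_sum_local_energy_le sum_abs_local_energy_diff_le by simp
qed

lemma first_node_bound: "(\<mu> + 1 / h\<^sup>2) * (w 1 / sqrt \<mu>)\<^sup>2 \<le> 24 * (1 + A\<^sup>2 / \<mu>)"
proof -
  have "(\<mu> + 1 / h\<^sup>2) * (w 1 / sqrt \<mu>)\<^sup>2 = (1 + 4 * ell) * (w 1)\<^sup>2 / (\<mu> * h\<^sup>2)"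
    using eigenvalue_pos h_pos by (simp add: ell_def power_divide field_simps)
  also have "\<dots> \<le> 4 * (1 + ell) * (w 1)\<^sup>2 / (\<mu> * h\<^sup>2)"
    using mult_right_mono[of "1 + 4 * ell" "4 * (1 + ell)" "(w 1)\<^sup>2"] ell_pos eigenvalue_pos h_pos
    by (intro divide_right_mono) simp_all
  also have "\<dots> \<le> 4 * (24 * ell + h\<^sup>2 * A\<^sup>2) / (\<mu> * h\<^sup>2)"
    using mult_left_mono[OF first_node_estimate, of 4] eigenvalue_pos h_pos
    by (intro divide_right_mono) (simp_all add: algebra_simps)
  also have "\<dots> = 24 + 4 * A\<^sup>2 / \<mu>"
    using eigenvalue_pos h_pos by (simp add: ell_def field_simps)
  also have "\<dots> \<le> 24 * (1 + A\<^sup>2 / \<mu>)"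
    using eigenvalue_pos by (simp add: divide_right_mono)
  finally show ?thesis .
qed

end

definition grid_values :: "nat \<Rightarrow> real vec \<Rightarrow> nat \<Rightarrow> real" where
  "grid_values N x j = (if 1 \<le> j \<and> j \<le> N then x $ (j - 1) else 0)"

lemma grid_values_Suc [simp]: "i < N \<Longrightarrow> grid_values N x (Suc i) = x $ i"
  by (simp add: grid_values_def)

lemma grid_values_boundary [simp]: "grid_values N x 0 = 0" "grid_values N x (Suc N) = 0"
  by (simp_all add: grid_values_def)

definition tridiag :: "nat \<Rightarrow> real \<Rightarrow> real \<Rightarrow> real mat" where
  "tridiag N \<alpha> \<beta> = mat N N (\<lambda>(i, j). if i = j then \<alpha> else if i = j + 1 \<or> j = i + 1 then \<beta> else 0)"

lemma dim_tridiag [simp]: "dim_row (tridiag N \<alpha> \<beta>) = N" "dim_col (tridiag N \<alpha> \<beta>) = N"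
  by (simp_all add: tridiag_def)

lemma tridiag_carrier [simp]: "tridiag N \<alpha> \<beta> \<in> carrier_mat N N"
  by (simp add: tridiag_def)

lemma smult_mat_mult_vec:
  assumes "A \<in> carrier_mat n m" "x \<in> carrier_vec m"
  shows "(c \<cdot>\<^sub>m A) *\<^sub>v x = c \<cdot>\<^sub>v (A *\<^sub>v x)"
proof (rule eq_vecI)
  fix i assume i: "i < dim_vec (c \<cdot>\<^sub>v (A *\<^sub>v x))"
  have "row A i \<in> carrier_vec m"
    using assms(1) by (simp add: carrier_vecI)
  then show "((c \<cdot>\<^sub>m A) *\<^sub>v x) $ i = (c \<cdot>\<^sub>v (A *\<^sub>v x)) $ i"
    using i assms by (simp add: smult_scalar_prod_distrib[of _ m])
qed simp

lemma tridiag_mult_vec_index: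
  assumes x: "x \<in> carrier_vec N" and i: "i < N"
  shows "(tridiag N \<alpha> \<beta> *\<^sub>v x) $ i
    = \<alpha> * grid_values N x (i+1) + \<beta> * (grid_values N x i + grid_values N x (i+2))"
proof -
  have "(tridiag N \<alpha> \<beta> *\<^sub>v x) $ i = (\<Sum>k<N. (if i = k then \<alpha> else if i = k + 1 \<or> k = i + 1 then \<beta> else 0) * x $ k)"
    using x i by (simp add: tridiag_def scalar_prod_def lessThan_atLeast0)
  also have "\<dots> = (\<Sum>k<N. if k = i then \<alpha> * x $ k else 0) + (\<Sum>k<N. if Suc k = i then \<beta> * x $ k else 0)
      + (\<Sum>k<N. if k = Suc i then \<beta> * x $ k else 0)"
    unfolding sum.distrib[symmetric] by (intro sum.cong) auto
  also have "\<dots> = \<alpha> * grid_values N x (i+1) + \<beta> * (grid_values N x i + grid_values N x (i+2))"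
    using i by (cases i) (auto simp: sum.delta grid_values_def algebra_simps)
  finally show ?thesis .
qed

lemma scalar_prod_grid_values:
  assumes "x \<in> carrier_vec N"
  shows "y \<bullet> x = (\<Sum>j=1..N. y $ (j-1) * grid_values N x j)"
proof -
  have "y \<bullet> x = (\<Sum>i=0..<N. y $ i * grid_values N x (Suc i))"
    using assms by (simp add: scalar_prod_def)
  also have "\<dots> = (\<Sum>j=Suc 0..<Suc N. y $ (j-1) * grid_values N x j)"
    by (subst sum.shift_bounds_Suc_ivl) simp
  also have "{Suc 0..<Suc N} = {1..N}"
    by auto
  finally show ?thesis .
qed

lemma tridiag_quadratic_form:
  assumes x: "x \<in> carrier_vec N"
  shows "(tridiag N (1 + s\<^sup>2) s *\<^sub>v x) \<bullet> x = (\<Sum>j=0..N. (grid_values N x (j+1) + s * grid_values N x j)\<^sup>2)"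
proof -
  let ?w = "grid_values N x"
  have "(tridiag N (1 + s\<^sup>2) s *\<^sub>v x) \<bullet> x = (\<Sum>j=1..N. ?w j * ((1 + s\<^sup>2) * ?w j + s * (?w (j-1) + ?w (j+1))))"
    unfolding scalar_prod_grid_values[OF x]
  proof (intro sum.cong refl)
    fix j assume "j \<in> {1..N}"
    then have "j - 1 < N" "j - 1 + 1 = j" "j - 1 + 2 = j + 1"
      by auto
    then show "(tridiag N (1 + s\<^sup>2) s *\<^sub>v x) $ (j-1) * ?w j = ?w j * ((1 + s\<^sup>2) * ?w j + s * (?w (j-1) + ?w (j+1)))"
      using tridiag_mult_vec_index[OF x \<open>j - 1 < N\<close>, of "1 + s\<^sup>2" s] by (simp only:) (simp add: algebra_simps)
  qed
  also have "\<dots> = (\<Sum>j=0..N. (?w (j+1) + s * ?w j)\<^sup>2)"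
    by (rule sum_shifted_combination_sq[symmetric]) simp_all
  finally show ?thesis .
qed

lemma M_h_eq_tridiag: "M_h N = (hN N / 4) \<cdot>\<^sub>m tridiag N 2 1"
  by (rule eq_matI) (auto simp: M_h_def tridiag_def)

lemma K_h_eq_tridiag: "K_h N = (1 / hN N) \<cdot>\<^sub>m tridiag N 2 (-1)"
  by (rule eq_matI) (auto simp: K_h_def tridiag_def)

lemma M_h_mult_vec_index:
  assumes "x \<in> carrier_vec N" "i < N"
  shows "(M_h N *\<^sub>v x) $ i = hN N / 4 * (2 * grid_values N x (i+1) + grid_values N x i + grid_values N x (i+2))"
  using assms by (simp add: M_h_eq_tridiag smult_mat_mult_vec[of _ N N] tridiag_mult_vec_index del: index_mult_mat_vec)

lemma K_h_mult_vec_index: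
  assumes "x \<in> carrier_vec N" "i < N"
  shows "(K_h N *\<^sub>v x) $ i = (2 * grid_values N x (i+1) - grid_values N x i - grid_values N x (i+2)) / hN N"
  using assms by (simp add: K_h_eq_tridiag smult_mat_mult_vec[of _ N N] tridiag_mult_vec_index del: index_mult_mat_vec)

lemma L_h_mult_vec_index:
  assumes "x \<in> carrier_vec N" "i < N"
  shows "(L_h a N *\<^sub>v x) $ i = hN N * a (real (i+1) * hN N) * grid_values N x (i+1)"
proof -
  have "(L_h a N *\<^sub>v x) $ i = (\<Sum>k=0..<N. (if i = k then hN N * a (real (i+1) * hN N) else 0) * x $ k)"
    using assms by (simp add: L_h_def scalar_prod_def)
  also have "\<dots> = hN N * a (real (i+1) * hN N) * x $ i"
    using assms(2) by (simp add: if_distrib[of "\<lambda>t. t * _"] sum.delta cong: if_cong)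
  finally show ?thesis
    using assms(2) by simp
qed

lemma M_h_quadratic_form:
  assumes "x \<in> carrier_vec N"
  shows "(M_h N *\<^sub>v x) \<bullet> x = hN N / 4 * (\<Sum>j=0..N. (grid_values N x (j+1) + grid_values N x j)\<^sup>2)"
proof -
  have "tridiag N 2 1 *\<^sub>v x \<in> carrier_vec N"
    by (rule mult_mat_vec_carrier[OF tridiag_carrier assms])
  then show ?thesis
    using assms tridiag_quadratic_form[OF assms, of 1]
    by (simp add: M_h_eq_tridiag smult_mat_mult_vec[of _ N N] smult_scalar_prod_distrib[of _ N])
qed

lemma M_h_carrier [simp]: "M_h N \<in> carrier_mat N N"
  by (simp add: M_h_def)

lemma K_h_carrier [simp]: "K_h N \<in> carrier_mat N N"
  by (simp add: K_h_def)

lemma L_h_carrier [simp]: "L_h a N \<in> carrier_mat N N"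
  by (simp add: L_h_def)

lemma det_M_h_nonzero: "det (M_h N) \<noteq> 0"
proof
  assume "det (M_h N) = 0"
  then obtain x where x: "x \<in> carrier_vec N" "x \<noteq> 0\<^sub>v N" "M_h N *\<^sub>v x = 0\<^sub>v N"
    using det_0_iff_vec_prod_zero[OF M_h_carrier] by blast
  then have "hN N / 4 * (\<Sum>j=0..N. (grid_values N x (j+1) + grid_values N x j)\<^sup>2) = 0"
    using M_h_quadratic_form[OF x(1)] by simp
  then have "(\<Sum>j=0..N. (grid_values N x (j+1) + grid_values N x j)\<^sup>2) = 0"
    by (simp add: hN_def)
  then have "grid_values N x j = 0" if "j \<le> N + 1" for j
    using eq_0_if_sum_shifted_combination_sq_eq_0[of "grid_values N x" 1 N j] that by simp
  then have "x = 0\<^sub>v N"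
    using x(1) grid_values_Suc[of _ N x] by (intro eq_vecI) (auto simp del: grid_values_Suc)
  with x(2) show False ..
qed

lemma mat_inverse_M_h:
  obtains B where "mat_inverse (M_h N) = Some B" "M_h N * B = 1\<^sub>m N" "B \<in> carrier_mat N N"
proof (cases "mat_inverse (M_h N)")
  case None
  have "M_h N \<in> Units (ring_mat TYPE(real) N ())"
    by (rule det_non_zero_imp_unit[OF M_h_carrier det_M_h_nonzero])
  with mat_inverse(1)[OF M_h_carrier None, where b = "()"] show ?thesis
    by blast
next
  case (Some B)
  then show ?thesis
    using that mat_inverse(2)[OF M_h_carrier Some] by blast
qed

lemma eigenvector_A_hD:
  assumes "eigenvector (A_h a N) v \<mu>"
  shows "v \<in> carrier_vec N" and "(K_h N + L_h a N) *\<^sub>v v = \<mu> \<cdot>\<^sub>v (M_h N *\<^sub>v v)"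
proof -
  obtain B where B: "mat_inverse (M_h N) = Some B" "M_h N * B = 1\<^sub>m N" "B \<in> carrier_mat N N"
    by (rule mat_inverse_M_h)
  let ?KL = "K_h N + L_h a N"
  have KL: "?KL \<in> carrier_mat N N"
    by simp
  have "A_h a N = B * ?KL"
    by (simp add: A_h_def B(1))
  then have v: "v \<in> carrier_vec N" and Av: "(B * ?KL) *\<^sub>v v = \<mu> \<cdot>\<^sub>v v"
    using assms B(3) by (auto simp: eigenvector_def)
  show "v \<in> carrier_vec N"
    by (fact v)
  have KLv: "?KL *\<^sub>v v \<in> carrier_vec N"
    by (rule mult_mat_vec_carrier[OF KL v])
  have "?KL *\<^sub>v v = (M_h N * B) *\<^sub>v (?KL *\<^sub>v v)"
    using B(2) KLv by simp
  also have "\<dots> = M_h N *\<^sub>v (B *\<^sub>v (?KL *\<^sub>v v))"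
    by (rule assoc_mult_mat_vec[OF M_h_carrier B(3) KLv])
  also have "B *\<^sub>v (?KL *\<^sub>v v) = \<mu> \<cdot>\<^sub>v v"
    using Av assoc_mult_mat_vec[OF B(3) KL v] by simp
  also have "M_h N *\<^sub>v (\<mu> \<cdot>\<^sub>v v) = \<mu> \<cdot>\<^sub>v (M_h N *\<^sub>v v)"
    by (rule mult_mat_vec[OF M_h_carrier v])
  finally show "?KL *\<^sub>v v = \<mu> \<cdot>\<^sub>v (M_h N *\<^sub>v v)" .
qed

lemma abs_le_Linf_norm:
  assumes "bounded (a ` {0..1})" "x \<in> {0..1}"
  shows "\<bar>a x\<bar> \<le> Linf_norm a"
proof -
  have "bdd_above ((\<lambda>x. \<bar>a x\<bar>) ` {0..1})"
    using assms(1) by (auto simp: bounded_iff intro: bdd_aboveI2)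
  then show ?thesis
    unfolding Linf_norm_def using assms(2) by (intro cSup_upper) auto
qed

lemma discrete_eigenfunction_grid_values:
  assumes bounded: "bounded (a ` {0..1})" and nonneg: "\<forall>x\<in>{0..1}. 0 \<le> a x"
    and eigenvector: "eigenvector (A_h a N) v \<mu>" and normalized: "(M_h N *\<^sub>v v) \<bullet> v = 1"
  shows "discrete_eigenfunction N (hN N) \<mu> (Linf_norm a) (\<lambda>j. a (real j * hN N)) (grid_values N v)"
proof unfold_locales
  let ?w = "grid_values N v"
  have v: "v \<in> carrier_vec N" and KLv: "(K_h N + L_h a N) *\<^sub>v v = \<mu> \<cdot>\<^sub>v (M_h N *\<^sub>v v)"
    using eigenvector_A_hD[OF eigenvector] by simp_all
  show "hN N * (real N + 1) = 1"
    by (simp add: hN_def)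
  show "?w 0 = 0" "?w (N + 1) = 0"
    by simp_all
  show "(2 * ?w j - ?w (j-1) - ?w (j+1)) / hN N + hN N * a (real j * hN N) * ?w j
      = \<mu> * (hN N / 4 * (2 * ?w j + ?w (j-1) + ?w (j+1)))" if "1 \<le> j" "j \<le> N" for j
  proof -
    obtain i where j: "j = Suc i" and i: "i < N"
      using \<open>1 \<le> j\<close> \<open>j \<le> N\<close> by (cases j) auto
    have "((K_h N + L_h a N) *\<^sub>v v) $ i = \<mu> * (M_h N *\<^sub>v v) $ i"
      using KLv i carrier_matD(1)[OF M_h_carrier] by simp
    then show ?thesis
      using i v carrier_matD(1)[OF K_h_carrier] carrier_matD(1)[OF L_h_carrier]
      unfolding j add_mult_distrib_mat_vec[OF K_h_carrier L_h_carrier v]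
      by (simp add: K_h_mult_vec_index L_h_mult_vec_index M_h_mult_vec_index del: index_mult_mat_vec)
  qed
  show "0 \<le> a (real j * hN N) \<and> a (real j * hN N) \<le> Linf_norm a" if "1 \<le> j" "j \<le> N" for j
  proof -
    have "real j * hN N \<in> {0..1}"
      using that by (simp add: hN_def field_simps)
    then show ?thesis
      using nonneg abs_le_Linf_norm[OF bounded] by fastforce
  qed
  show "hN N / 4 * (\<Sum>j=0..N. (?w (j+1) + ?w j)\<^sup>2) = 1"
    using M_h_quadratic_form[OF v] normalized by simp
qed

lemma eigenvector_A_h_first_entry_bound:
  assumes "bounded (a ` {0..1})" "\<forall>x\<in>{0..1}. 0 \<le> a x" "1 \<le> N"
    and "eigenvector (A_h a N) v \<mu>" "(M_h N *\<^sub>v v) \<bullet> v = 1"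
  shows "(\<mu> + 1 / (hN N)\<^sup>2) * \<bar>vec_index v 0 / sqrt \<mu>\<bar>\<^sup>2 \<le> 24 * (1 + (Linf_norm a)\<^sup>2 / \<mu>)"
proof -
  interpret discrete_eigenfunction N "hN N" \<mu> "Linf_norm a" "\<lambda>j. a (real j * hN N)" "grid_values N v"
    using discrete_eigenfunction_grid_values assms by blast
  have "vec_index v 0 = grid_values N v 1"
    using \<open>1 \<le> N\<close> by (simp add: grid_values_def)
  then show ?thesis
    unfolding power2_abs using first_node_bound by simp
qed

theorem lemma2:
  shows "\<exists>h0 > 0. \<exists>C0 > 0. \<forall>(a :: real \<Rightarrow> real) (N :: nat) (n :: nat) (v :: real vec).
     set_borel_measurable lborel {0..1} a \<and> bounded (a ` {0..1}) \<and> (\<forall>x\<in>{0..1}. 0 \<le> a x) \<and>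
     1 \<le> N \<and> hN N < h0 \<and> 1 \<le> n \<and> n \<le> N \<and>
     eigenvector (A_h a N) v (mu_h a N n) \<and> (M_h N *\<^sub>v v) \<bullet> v = 1
     \<longrightarrow> (mu_h a N n + 1 / (hN N)\<^sup>2) * \<bar>vec_index v 0 / sqrt (mu_h a N n)\<bar>\<^sup>2
         \<le> C0 * (1 + (Linf_norm a)\<^sup>2 / mu_h a N n)"
  \<comment> \<open>Measurability, the smallness of \<open>h\<close> and the index of the eigenvalue play no role.\<close>
  by (rule exI[of _ 1]) (use eigenvector_A_h_first_entry_bound in \<open>auto intro!: exI[of _ 24]\<close>)

end
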